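(* For all real numbers $t,s$, $$\lim_{k\to\infty} C_k\, k^t\, \eta_k^{2k+s} = 0.$$
   Context: For integers $k\ge 2$, $C_k:=\frac{(2k-2)!}{(k-1)!}$. Define the polynomials $p_k(z)=1-2z-(7+8k)z^2$, $h_k(z)=1-z-C_k z^{2k+1}$, and $\Delta_k(z)=p_k(z)+4z^{2k+1}C_k h_k(z)$. $\eta_k$ denotes the unique real root of $\Delta_k$ in the open interval $\left(0,\frac{1}{\sqrt{8+8k}}\right)$. *)

theory Defs
  imports Complex_Main
begin

definition C :: "nat \<Rightarrow> real" where
  "C k = fact (2*k - 2) / fact (k - 1)"

definition p :: "nat \<Rightarrow> real \<Rightarrow> real" where
  "p k z = 1 - 2*z - (7 + 8 * real k) * z^2"

definition h :: "nat \<Rightarrow> real \<Rightarrow> real" where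
  "h k z = 1 - z - C k * z^(2*k+1)"

definition Delta :: "nat \<Rightarrow> real \<Rightarrow> real" where
  "Delta k z = p k z + 4 * z^(2*k+1) * C k * h k z"

definition eta :: "nat \<Rightarrow> real" where
  "eta k = (THE z. 0 < z \<and> z < 1 / sqrt (8 + 8 * real k) \<and> Delta k z = 0)"

end

theory Submission imports Defs "HOL-Real_Asymp.Real_Asymp" begin

text \<open>Let \<open>r = 1 / sqrt (8 + 8k)\<close>. From \<open>C k \<le> (2k)^k\<close> we get \<open>C k z^(2k) \<le> 4^-k\<close> for
  \<open>0 \<le> z \<le> r\<close>. With this estimate, for \<open>k \<ge> 3\<close> the polynomial \<open>Delta k\<close> has negative
  derivative on \<open>[0, r]\<close>, is negative at \<open>r\<close> and positive at \<open>r/2\<close>; so its unique zero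
  \<open>eta k\<close> in \<open>(0, r)\<close> lies in \<open>(r/2, r)\<close>. Hence \<open>C k eta^(2k) \<le> 4^-k\<close>, while
  \<open>k^t eta^s \<le> k^t (2/r)^|s|\<close> grows only polynomially in \<open>k\<close>.\<close>

lemma C_nonneg: "C k \<ge> 0"
  unfolding C_def by simp

lemma C_le_power: assumes "k \<ge> 1" shows "C k \<le> (2 * real k) ^ k"
proof -
  define m where "m = k - 1"
  have m: "2*k - 2 = 2*m" "2*m - m = m" using assms by (auto simp: m_def)
  have "(fact m :: nat) dvd fact (2*m)" by (rule fact_dvd) simp
  then have "C k = real ((fact (2*m) :: nat) div fact m)"
    unfolding C_def m(1) m_def[symmetric] by (simp add: real_of_nat_div of_nat_fact)
  also have "\<dots> \<le> real ((2*m)^m)"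
    using fact_div_fact_le_pow[of m "2*m"] m(2) by (simp only: of_nat_le_iff)
  also have "\<dots> \<le> (2*real k)^m" by (simp add: power_mono m_def)
  also have "\<dots> \<le> (2*real k)^k" by (rule power_increasing) (use assms in \<open>auto simp: m_def\<close>)
  finally show ?thesis .
qed

definition eta_bound :: "nat \<Rightarrow> real" where
  "eta_bound k = 1 / sqrt (8 + 8 * real k)"

lemma eta_bound_pos: "eta_bound k > 0"
  unfolding eta_bound_def by simp

lemma eta_bound_le_half: "eta_bound k \<le> 1/2"
proof -
  have "sqrt 4 \<le> sqrt (8 + 8 * real k)" by (rule real_sqrt_le_mono) simp
  then show ?thesis unfolding eta_bound_def by (simp add: field_simps)
qed

lemma eta_bound_square: "(eta_bound k)^2 = 1 / (8 + 8 * real k)"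
  unfolding eta_bound_def by (simp add: power_divide)

lemma C_mult_power_le:
  assumes "k \<ge> 1" "0 \<le> z" "z \<le> eta_bound k"
  shows "C k * z^(2*k) \<le> (1/4)^k"
proof -
  have "z^(2*k) = (z^2)^k" by (simp add: power_mult)
  also have "\<dots> \<le> (1 / (8 + 8 * real k))^k"
    using assms by (intro power_mono) (auto simp flip: eta_bound_square intro: power_mono)
  finally have "C k * z^(2*k) \<le> (2 * real k)^k * (1 / (8 + 8 * real k))^k"
    by (intro mult_mono C_le_power assms) (auto simp: C_nonneg)
  also have "\<dots> = (2 * real k / (8 + 8 * real k))^k" by (simp add: power_divide)
  also have "\<dots> \<le> (1/4)^k" by (intro power_mono) (auto simp: field_simps)
  finally show ?thesis .
qed

lemma C_mult_power_le_inverse_64: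
  assumes "k \<ge> 3" "0 \<le> z" "z \<le> eta_bound k"
  shows "C k * z^(2*k) \<le> 1/64"
proof -
  have "C k * z^(2*k) \<le> (1/4)^k" using C_mult_power_le assms by simp
  also have "\<dots> \<le> (1/4)^3" by (rule power_decreasing) (use assms in auto)
  finally show ?thesis by (simp add: power3_eq_cube)
qed

lemma Delta_eq: "Delta k z = p k z + 4*z*(C k*z^(2*k))*(1 - z - (C k*z^(2*k))*z)"
  unfolding Delta_def h_def by (simp add: algebra_simps)

lemma Delta_has_derivative:
  fixes k :: nat and z :: real
  defines "w \<equiv> C k * z^(2*k)"
  shows "DERIV (Delta k) z :>
    -2 - 2*(7 + 8*real k)*z + 4*(2*real k + 1)*w - 4*(2*real k + 2)*w*z - 4*(4*real k + 2)*w^2*z"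
proof -
  define P where "P = (\<lambda>z. 1 - 2*z - (7 + 8*real k)*z^2 + 4*C k*z^(2*k+1) - 4*C k*z^(2*k+2)
      - 4*(C k)^2*z^(4*k+2))"
  have "Delta k = P"
    by (rule ext) (simp add: P_def Delta_def p_def h_def algebra_simps power2_eq_square
        flip: power_add mult_2)
  moreover have "DERIV P z :> -2 - 2*(7 + 8*real k)*z + 4*C k*(2*real k + 1)*z^(2*k)
      - 4*C k*(2*real k + 2)*z^(2*k+1) - 4*(C k)^2*(4*real k + 2)*z^(4*k+1)"
    unfolding P_def by (rule derivative_eq_intros refl | simp)+ (simp add: algebra_simps)
  moreover have "z^(4*k+1) = (z^(2*k))^2*z" "z^(2*k+1) = z^(2*k)*z"
    by (simp_all add: power_mult_distrib flip: power_add power_mult)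
  ultimately show ?thesis
    unfolding w_def by (simp only: power_mult_distrib mult_ac)
qed

lemma four_power_gt: "k \<ge> 3 \<Longrightarrow> 2*(2*real k + 1) < 4^k"
  by (induction k rule: nat_induct_at_least) simp_all

lemma Delta_strict_decreasing:
  assumes "k \<ge> 3" "0 \<le> x" "x < y" "y \<le> eta_bound k"
  shows "Delta k y < Delta k x"
proof (rule DERIV_neg_imp_decreasing[OF assms(3)])
  fix z assume z: "x \<le> z" "z \<le> y"
  define w where "w = C k * z^(2*k)"
  have w: "0 \<le> w" "w \<le> (1/4)^k"
    using C_mult_power_le[of k z] C_nonneg[of k] z assms by (auto simp: w_def)
  have "4*(2*real k + 1)*w \<le> 4*(2*real k + 1)*(1/4)^k" using w by simp
  also have "\<dots> < 2" using four_power_gt[OF assms(1)] by (simp add: field_simps)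
  finally have "4*(2*real k + 1)*w < 2" .
  moreover have "0 \<le> (7 + 8*real k)*z" "0 \<le> (2*real k + 2)*w*z" "0 \<le> (4*real k + 2)*w^2*z"
    using w z assms by simp_all
  ultimately have "-2 - 2*(7 + 8*real k)*z + 4*(2*real k + 1)*w - 4*(2*real k + 2)*w*z
      - 4*(4*real k + 2)*w^2*z < 0"
    by linarith
  then show "\<exists>y. DERIV (Delta k) z :> y \<and> y < 0"
    using Delta_has_derivative[of k z] unfolding w_def by blast
qed

lemma Delta_at_eta_bound_neg: assumes "k \<ge> 3" shows "Delta k (eta_bound k) < 0"
proof -
  define a where "a = eta_bound k"
  define w where "w = C k * a^(2*k)"
  have a: "0 < a" "a \<le> 1/2" using eta_bound_pos eta_bound_le_half by (auto simp: a_def)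
  have w: "0 \<le> w" "w \<le> 1/64"
    using C_nonneg[of k] C_mult_power_le_inverse_64[OF assms, of a] a by (simp_all add: w_def a_def)
  have "1 - a - w*a \<le> 1" using a w mult_nonneg_nonneg[of w a] by linarith
  then have "4*a*w*(1 - a - w*a) \<le> 4*a*w"
    by (rule mult_left_le) (use a w in simp)
  also have "\<dots> \<le> a/16" using a w by simp
  finally have "4*a*w*(1 - a - w*a) \<le> a/16" .
  moreover have "p k a = a^2 - 2*a"
    unfolding p_def a_def eta_bound_square by (simp add: field_simps)
  moreover have "a^2 \<le> a/2" using a by (simp add: power2_eq_square)
  ultimately show ?thesis using a unfolding Delta_eq w_def[symmetric] a_def[symmetric] by linarith
qed

lemma Delta_at_half_eta_bound_pos: assumes "k \<ge> 3" shows "Delta k (eta_bound k / 2) > 0"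
proof -
  define b where "b = eta_bound k / 2"
  define w where "w = C k * b^(2*k)"
  have b: "0 < b" "b \<le> 1/4" "b \<le> eta_bound k"
    using eta_bound_pos[of k] eta_bound_le_half[of k] by (auto simp: b_def)
  have w: "0 \<le> w" "w \<le> 1/64"
    using C_nonneg[of k] C_mult_power_le_inverse_64[OF assms, of b] b by (simp_all add: w_def)
  have "-1 \<le> 1 - b - w*b" using b w mult_mono[of w "1/64" b "1/4"] by linarith
  then have "4*b*w*(-1) \<le> 4*b*w*(1 - b - w*b)"
    by (rule mult_left_mono) (use b w in simp)
  moreover have "4*b*w \<le> 4*(1/4)*(1/64)" using b w by (intro mult_mono) auto
  ultimately have "-1/64 \<le> 4*b*w*(1 - b - w*b)" by linarith
  moreover have "(7 + 8 * real k) * b^2 \<le> 1/4"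
    unfolding b_def power_divide eta_bound_square by (simp add: field_simps)
  ultimately show ?thesis
    using b unfolding Delta_eq p_def w_def[symmetric] b_def[symmetric] by linarith
qed

lemma THE_zero_of_strict_decreasing:
  fixes f :: "real \<Rightarrow> real"
  assumes dec: "\<And>x y. 0 \<le> x \<Longrightarrow> x < y \<Longrightarrow> y \<le> a \<Longrightarrow> f y < f x"
    and cont: "continuous_on {b..a} f" and "0 < b" "b < a" "f a < 0" "0 < f b"
  shows "(THE z. 0 < z \<and> z < a \<and> f z = 0) \<in> {b<..<a}"
proof -
  obtain z where "b \<le> z" "z \<le> a" "f z = 0"
    using IVT2'[of f a 0 b, OF _ _ _ cont] assms by auto
  moreover have "z \<noteq> a" "z \<noteq> b" using \<open>f z = 0\<close> assms by auto
  ultimately have z: "b < z" "z < a" "f z = 0" by auto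
  have "(THE z. 0 < z \<and> z < a \<and> f z = 0) = z"
  proof (rule the_equality)
    fix y assume "0 < y \<and> y < a \<and> f y = 0"
    with z dec[of y z] dec[of z y] \<open>0 < b\<close> show "y = z"
      by (cases y z rule: linorder_cases) auto
  qed (use z \<open>0 < b\<close> in auto)
  with z show ?thesis by simp
qed

lemma eta_between: assumes "k \<ge> 3" shows "eta k \<in> {eta_bound k / 2 <..< eta_bound k}"
proof -
  have "continuous_on {eta_bound k / 2 .. eta_bound k} (Delta k)"
    using Delta_has_derivative DERIV_isCont continuous_at_imp_continuous_on by blast
  from THE_zero_of_strict_decreasing[of "eta_bound k" "Delta k", OF _ this]
  show ?thesis
    unfolding eta_def eta_bound_def[symmetric]
    using Delta_strict_decreasing[OF assms] eta_bound_pos[of k] Delta_at_eta_bound_neg[OF assms]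
      Delta_at_half_eta_bound_pos[OF assms] by auto
qed

lemma powr_le_inverse_powr_abs:
  fixes c e s :: real
  assumes "0 < c" "c \<le> e" "e \<le> 1"
  shows "e powr s \<le> (1/c) powr \<bar>s\<bar>"
proof (cases "s \<ge> 0")
  case True
  have "e powr s \<le> 1" using assms True by (simp add: powr_le1)
  also have "1 \<le> (1/c) powr \<bar>s\<bar>" using assms by (intro ge_one_powr_ge_zero) auto
  finally show ?thesis .
next
  case False
  have "e powr s = (1/e) powr (-s)" using assms by (simp add: powr_divide powr_minus_divide)
  also have "\<dots> \<le> (1/c) powr (-s)" using False assms by (intro powr_mono2) (auto simp: field_simps)
  finally show ?thesis using False by simp
qed

lemma C_eta_powr_le:
  assumes "k \<ge> 3"
  shows "C k * real k powr t * eta k powr (2 * real k + s)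
     \<le> (1/4)^k * real k powr t * (2 * sqrt (8 + 8 * real k)) powr \<bar>s\<bar>"
proof -
  define e where "e = eta k"
  have e: "eta_bound k / 2 < e" "e < eta_bound k" using eta_between[OF assms] by (auto simp: e_def)
  have e0: "0 < e" using e eta_bound_pos[of k] by linarith
  have "C k * e^(2*k) \<le> (1/4)^k" using C_mult_power_le[of k e] e e0 assms by simp
  moreover have "e powr s \<le> (2 * sqrt (8 + 8 * real k)) powr \<bar>s\<bar>"
    using powr_le_inverse_powr_abs[of "eta_bound k / 2" e s] e eta_bound_pos[of k]
      eta_bound_le_half[of k] by (simp add: eta_bound_def mult.commute)
  ultimately have bound: "C k * e^(2*k) * e powr s \<le> (1/4)^k * (2 * sqrt (8 + 8 * real k)) powr \<bar>s\<bar>"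
    by (intro mult_mono) simp_all
  have "C k * real k powr t * e powr (2 * real k + s) = C k * e^(2*k) * e powr s * real k powr t"
    using e0 by (simp add: powr_add powr_realpow[symmetric])
  also have "\<dots> \<le> (1/4)^k * (2 * sqrt (8 + 8 * real k)) powr \<bar>s\<bar> * real k powr t"
    using bound by (rule mult_right_mono) simp
  finally show ?thesis
    unfolding e_def by (simp only: mult_ac)
qed

theorem lemma2:
  fixes t s :: real
  shows "(\<lambda>k. C k * real k powr t * eta k powr (2 * real k + s)) \<longlonglongrightarrow> 0"
proof (rule tendsto_sandwich[of "\<lambda>_. 0"])
  show "\<forall>\<^sub>F k in sequentially. 0 \<le> C k * real k powr t * eta k powr (2 * real k + s)"
    by (simp add: C_nonneg)
  show "\<forall>\<^sub>F k in sequentially. C k * real k powr t * eta k powr (2 * real k + s)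
     \<le> (1/4)^k * real k powr t * (2 * sqrt (8 + 8 * real k)) powr \<bar>s\<bar>"
    using C_eta_powr_le eventually_sequentially by blast
  show "(\<lambda>k. (1/4)^k * real k powr t * (2 * sqrt (8 + 8 * real k)) powr \<bar>s\<bar>) \<longlonglongrightarrow> 0"
    by real_asymp
qed simp

end
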